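(* Let $k\ge4$ be an integer, $\eta\in[\eta_{k+1},\eta_k)$, and $j\ge k$ an integer. Then $\Psi_j(\eta)>0$, where $\Psi_j(\eta)=\sin\eta+|a|^{j-2}\sin((j+1)\eta)$.
   Context: For $\eta\in(0,\pi/3)$ let $|a|=\frac{1}{2\cos\eta}$. For integers $k\ge1$ let $\Phi_k(\eta)=(1-|a|^4)\sin((k-1)\eta)-|a|^3\sin((k-2)\eta)+|a|^k\sin\eta$. For each integer $k\ge4$, $\Phi_k$ has a unique zero in $(\pi/k,\pi/(k-1))$, denoted $\eta_k$. *)

theory Defs
  imports Complex_Main
begin

definition absa :: "real \<Rightarrow> real" where
  "absa \<eta> = 1 / (2 * cos \<eta>)"

definition Phi :: "nat \<Rightarrow> real \<Rightarrow> real" where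
  "Phi k \<eta> = (1 - absa \<eta> ^ 4) * sin ((real k - 1) * \<eta>)
              - absa \<eta> ^ 3 * sin ((real k - 2) * \<eta>)
              + absa \<eta> ^ k * sin \<eta>"

text \<open>eta_k: the unique zero of Phi_k in (pi/k, pi/(k-1)), for k >= 4.\<close>
definition eta :: "nat \<Rightarrow> real" where
  "eta k = (THE \<eta>. pi / real k < \<eta> \<and> \<eta> < pi / (real k - 1) \<and> Phi k \<eta> = 0)"

definition Psi :: "nat \<Rightarrow> real \<Rightarrow> real" where
  "Psi j \<eta> = sin \<eta> + absa \<eta> ^ (j - 2) * sin ((real j + 1) * \<eta>)"

end

theory Submission
  imports Defs "HOL-Analysis.Analysis"
begin

(* Since |a| < 1 for eta < pi/3, Psi_j(eta) >= sin eta - |a|^(j-2) >= sin eta - |a|^(k-2) for j >= k,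
   so it suffices to show |a|^(k-2) < sin eta.  Only for k = 4 and j in {4, 5} is this too crude;
   there Psi_j(eta) is sin eta times a manifestly positive rational function of cos eta.

   The hypothesis places eta in (pi/(k+1), pi/(k-1)), which needs eta_k to be the zero of Phi_k
   described in the definition.  For k >= 5, Phi_k is positive at pi/k, negative at pi/(k-1) and
   strictly decreasing in between, because its derivative is dominated by the term
   (k-1) cos((k-1) eta) <= -(k-1)/sqrt 2.  For k = 4, Phi_4 = sin eta (1-|a|^2)(1-2|a|^4)/|a|^2,
   so eta_4 is the point of (pi/4, pi/3) where cos^4 eta = 1/8.

   What remains are elementary estimates: |a|^4 < 1/2 < sin eta for k = 4, |a|^3 < 1/2 < sin eta
   for k = 5, and for k >= 6, |a| <= 2/3 gives |a|^(k-2) <= 2/(k+1) < 3 eta/4 <= sin eta. *)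

lemma ex1_root_of_strict_decreasing:
  fixes f :: "real \<Rightarrow> real"
  assumes "a \<le> c" and "continuous_on {a..c} f" and "f c < 0" and "0 < f a"
    and decreasing: "\<And>u v. a \<le> u \<Longrightarrow> u < v \<Longrightarrow> v \<le> c \<Longrightarrow> f v < f u"
  shows "\<exists>!x. a < x \<and> x < c \<and> f x = 0"
proof -
  obtain z where z: "a \<le> z" "z \<le> c" "f z = 0"
    using IVT2'[of f c 0 a] assms by auto
  with assms have "a < z" "z < c"
    by (auto simp: le_less)
  moreover have "y = z" if "a < y" "y < c" "f y = 0" for y
    using decreasing[of y z] decreasing[of z y] that z by (cases y z rule: linorder_cases) auto
  ultimately show ?thesis
    using z by blast
qed

lemma mult_power_antimono:
  fixes b :: real
  assumes "0 \<le> b" and "(real m + 2) * b \<le> real m + 1" and "m \<le> n"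
  shows "(real n + 1) * b ^ n \<le> (real m + 1) * b ^ m"
  using assms(3)
proof (induction n rule: dec_induct)
  case (step n)
  have "b \<le> 1"
  proof (rule ccontr)
    assume "\<not> b \<le> 1"
    then have "real m + 2 < (real m + 2) * b"
      by simp
    with assms(2) show False
      by linarith
  qed
  then have "(real n - real m) * b \<le> real n - real m"
    using step.hyps by (intro mult_left_le) auto
  then have "(real n + 2) * b \<le> real n + 1"
    using assms(2) by (simp add: algebra_simps)
  then have "((real n + 2) * b) * b ^ n \<le> (real n + 1) * b ^ n"
    using assms(1) by (intro mult_right_mono) auto
  then have "(real (Suc n) + 1) * b ^ Suc n \<le> (real n + 1) * b ^ n"
    by (simp add: algebra_simps)
  with step.IH show ?case
    by linarith
qed simp

lemma two_thirds_power_le: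
  assumes "6 \<le> k"
  shows "(2 / 3 :: real) ^ (k - 2) \<le> 2 / (real k + 1)"
proof -
  define q :: real where "q = (2 / 3) ^ (k - 2)"
  have "k = (k - 2) + 2"
    using assms(1) by simp
  then have "(2 / 3 :: real) ^ k = q * (2 / 3) ^ 2"
    unfolding q_def by (metis power_add)
  also have "\<dots> = q * (4 / 9)"
    by (simp add: power2_eq_square)
  finally have pow_k: "(2 / 3 :: real) ^ k = q * (4 / 9)" .
  have pow_6: "(2 / 3 :: real) ^ 6 = 64 / 729"
    by (simp add: power_divide)
  have "(real k + 1) * (2 / 3) ^ k \<le> (real 6 + 1) * (2 / 3 :: real) ^ 6"
    using assms(1) by (intro mult_power_antimono) auto
  then have "(real k + 1) * (q * (4 / 9)) \<le> (real 6 + 1) * (64 / 729)"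
    by (simp only: pow_k pow_6)
  then have "(real k + 1) * q \<le> 2"
    by (simp add: algebra_simps)
  then show ?thesis
    unfolding q_def by (simp add: pos_le_divide_eq mult.commute)
qed

lemma cos_ge_1_minus_sq_half: "1 - x\<^sup>2 / 2 \<le> cos (x :: real)"
proof -
  have "sin (x / 2) ^ 2 \<le> (x / 2) ^ 2"
    using power_mono[OF abs_sin_x_le_abs_x[of "x / 2"] abs_ge_zero, of 2] by (simp only: power2_abs)
  moreover have "cos x = 1 - 2 * sin (x / 2) ^ 2"
    using cos_double_sin[of "x / 2"] by simp
  ultimately show ?thesis
    by (simp add: power_divide power2_abs)
qed

lemma mult_cos_le_sin:
  assumes "0 \<le> x" and "x < pi / 2"
  shows "x * cos x \<le> sin x"
proof -
  have "0 < cos x"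
    using assms by (intro cos_gt_zero_pi) auto
  moreover have "x \<le> tan x"
    using abs_tan_ge[of x] assms tan_pos_pi2_le[of x] by simp
  ultimately show ?thesis
    by (simp add: tan_def pos_le_divide_eq)
qed

lemma cos_ge_sqrt2_half: "0 \<le> x \<Longrightarrow> x \<le> pi / 4 \<Longrightarrow> sqrt 2 / 2 \<le> cos x"
  using cos_monotone_0_pi_le[of x "pi / 4"] by (simp add: cos_45)

lemma sqrt2_half_gt: "7 / 10 < sqrt 2 / 2"
  using real_less_rsqrt[of "14 / 10" 2] by (simp add: power2_eq_square)

lemma cos_gt_half:
  assumes "0 \<le> x" and "x < pi / 3"
  shows "1 / 2 < cos x"
  using cos_monotone_0_pi[of x "pi / 3"] assms by (simp add: cos_60)

lemma sin_gt_half: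
  assumes "pi / 6 < x" and "x \<le> pi / 2"
  shows "1 / 2 < sin x"
  using sin_monotone_2pi[of "pi / 6" x] assms by (simp add: sin_30)

lemma sin_mult_Suc: "sin ((n + 1) * x) = 2 * cos x * sin (n * x) - sin ((n - 1) * x :: real)"
  using sin_add[of "n * x" x] sin_diff[of "n * x" x] by (simp add: algebra_simps)

lemma sin_small_multiples:
  fixes x :: real
  shows "sin (2 * x) = sin x * (2 * cos x)"
    and "sin (3 * x) = sin x * (4 * cos x ^ 2 - 1)"
    and "sin (5 * x) = sin x * (16 * cos x ^ 4 - 12 * cos x ^ 2 + 1)"
    and "sin (6 * x) = sin x * (32 * cos x ^ 5 - 32 * cos x ^ 3 + 6 * cos x)"
proof -
  show s2: "sin (2 * x) = sin x * (2 * cos x)"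
    by (simp add: sin_double)
  have rec: "sin (3 * x) = 2 * cos x * sin (2 * x) - sin x"
    "sin (4 * x) = 2 * cos x * sin (3 * x) - sin (2 * x)"
    "sin (5 * x) = 2 * cos x * sin (4 * x) - sin (3 * x)"
    "sin (6 * x) = 2 * cos x * sin (5 * x) - sin (4 * x)"
    using sin_mult_Suc[of 2 x] sin_mult_Suc[of 3 x] sin_mult_Suc[of 4 x] sin_mult_Suc[of 5 x]
    by simp_all
  show s3: "sin (3 * x) = sin x * (4 * cos x ^ 2 - 1)"
    unfolding rec s2 by (simp add: algebra_simps power2_eq_square)
  have s4: "sin (4 * x) = sin x * (8 * cos x ^ 3 - 4 * cos x)"
    unfolding rec s3 s2 by (simp add: algebra_simps power2_eq_square power3_eq_cube)
  show s5: "sin (5 * x) = sin x * (16 * cos x ^ 4 - 12 * cos x ^ 2 + 1)"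
    unfolding rec(3) s4 s3 by (simp add: algebra_simps power2_eq_square power3_eq_cube power4_eq_xxxx)
  show "sin (6 * x) = sin x * (32 * cos x ^ 5 - 32 * cos x ^ 3 + 6 * cos x)"
    unfolding rec(4) s5 s4
    by (simp add: algebra_simps power2_eq_square power3_eq_cube power4_eq_xxxx numeral_eq_Suc)
qed

lemma absa_pos: "0 < cos x \<Longrightarrow> 0 < absa x"
  by (simp add: absa_def)

lemma absa_lt_1: "1 / 2 < cos x \<Longrightarrow> absa x < 1"
  by (simp add: absa_def)

lemma absa_mult_cos: "cos x \<noteq> 0 \<Longrightarrow> 2 * absa x * cos x = 1"
  by (simp add: absa_def)

lemma
  assumes "0 \<le> x" and "x \<le> pi / 4"
  shows sin_sq_le_half: "sin x ^ 2 \<le> 1 / 2"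
    and absa_sq_le_half: "absa x ^ 2 \<le> 1 / 2"
    and absa_pow4_le_quarter: "absa x ^ 4 \<le> 1 / 4"
proof -
  have "(sqrt 2 / 2) ^ 2 \<le> cos x ^ 2"
    using cos_ge_sqrt2_half[OF assms] by (intro power_mono) auto
  then have cos2: "1 / 2 \<le> cos x ^ 2"
    by (simp add: power_divide)
  then show "sin x ^ 2 \<le> 1 / 2"
    using sin_cos_squared_add[of x] by linarith
  show b2: "absa x ^ 2 \<le> 1 / 2"
    using cos2 by (simp add: absa_def power_divide power_mult_distrib divide_simps)
  have "absa x ^ 4 = (absa x ^ 2) ^ 2"
    by (simp flip: power_mult)
  also have "\<dots> \<le> (1 / 2) ^ 2"
    using b2 by (intro power_mono) auto
  finally show "absa x ^ 4 \<le> 1 / 4"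
    by (simp add: power2_eq_square)
qed

section \<open>The zeros of Phi\<close>

lemma absa_has_real_derivative [derivative_intros]:
  "cos x \<noteq> 0 \<Longrightarrow> (absa has_real_derivative (2 * absa x ^ 2 * sin x)) (at x within S)"
  unfolding absa_def [abs_def]
  by (auto intro!: derivative_eq_intros simp: field_simps power2_eq_square)

definition DPhi :: "nat \<Rightarrow> real \<Rightarrow> real" where
  "DPhi k x = (let b = absa x; b' = 2 * b ^ 2 * sin x in
    - 4 * b ^ 3 * b' * sin ((real k - 1) * x) + (1 - b ^ 4) * (real k - 1) * cos ((real k - 1) * x)
    - 3 * b ^ 2 * b' * sin ((real k - 2) * x) - b ^ 3 * (real k - 2) * cos ((real k - 2) * x)
    + real k * b ^ (k - 1) * b' * sin x + b ^ k * cos x)"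

lemma Phi_has_real_derivative:
  assumes "cos x \<noteq> 0"
  shows "(Phi k has_real_derivative DPhi k x) (at x within S)"
  unfolding Phi_def [abs_def] DPhi_def Let_def
  using assms by (auto intro!: derivative_eq_intros simp: algebra_simps power2_eq_square)

lemma absa_power_bounds:
  assumes "0 \<le> x" and "x \<le> pi / 4" and "5 \<le> k"
  shows "absa x ^ 3 \<le> 355 / 1000" and "absa x ^ k \<le> 1 / 4" and "real k * absa x ^ (k - 1) \<le> 5 / 4"
proof -
  define b where "b = absa x"
  have "0 < cos x"
    by (rule cos_gt_zero_pi) (use assms pi_gt_zero in linarith)+
  then have b0: "0 < b"
    by (simp add: b_def absa_pos)
  have b2: "b ^ 2 \<le> 1 / 2"
    unfolding b_def using absa_sq_le_half[OF assms(1,2)] .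
  have "b ^ 2 \<le> (71 / 100) ^ 2"
    using b2 by (simp add: power2_eq_square)
  then have b71: "b \<le> 71 / 100"
    by (rule power2_le_imp_le) simp
  have "b * b ^ 2 \<le> (71 / 100) * (1 / 2)"
    using b0 b2 b71 by (intro mult_mono) auto
  then show "absa x ^ 3 \<le> 355 / 1000"
    by (simp add: b_def power2_eq_square power3_eq_cube)
  have b4: "b ^ 4 \<le> 1 / 4"
    unfolding b_def using absa_pow4_le_quarter[OF assms(1,2)] .
  have "b ^ k \<le> b ^ 4"
    using b0 b71 assms(3) by (intro power_decreasing) auto
  then show "absa x ^ k \<le> 1 / 4"
    using b4 by (simp add: b_def)
  have "(real (k - 1) + 1) * b ^ (k - 1) \<le> (real 4 + 1) * b ^ 4"
    using b0 b71 assms(3) by (intro mult_power_antimono) auto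
  then show "real k * absa x ^ (k - 1) \<le> 5 / 4"
    using b4 assms(3) by (simp add: b_def of_nat_diff)
qed

lemma pi_div_k_interval_subset:
  assumes "5 \<le> k" and "pi / real k \<le> x" and "x \<le> pi / (real k - 1)"
  shows "0 < x" and "x \<le> pi / 4"
proof -
  have "0 < pi / real k"
    using assms(1) by simp
  then show "0 < x"
    using assms(2) by linarith
  have "pi / (real k - 1) \<le> pi / 4"
    using assms(1) by (intro divide_left_mono) auto
  then show "x \<le> pi / 4"
    using assms(3) by linarith
qed

lemma sin_cos_mult_bounds:
  assumes "5 \<le> k" and "pi / real k \<le> x" and "x \<le> pi / (real k - 1)"
  shows "cos ((real k - 1) * x) \<le> - 7 / 10" and "0 \<le> sin ((real k - 1) * x)"
    and "0 \<le> sin ((real k - 2) * x)"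
proof -
  have k: "5 \<le> real k"
    using assms(1) by simp
  have x0: "0 < x"
    using pi_div_k_interval_subset[OF assms] by simp
  have kx: "(real k - 1) * x \<le> pi"
    using assms(3) k by (simp add: pos_le_divide_eq mult.commute)
  have "pi / real k \<le> pi / 4"
    using k by (intro divide_left_mono) auto
  then have "pi - pi / 4 \<le> (real k - 1) * (pi / real k)"
    using k by (simp add: field_simps)
  also have "\<dots> \<le> (real k - 1) * x"
    using assms(2) k by (intro mult_left_mono) auto
  finally have "cos ((real k - 1) * x) \<le> cos (pi - pi / 4)"
    using kx by (intro cos_monotone_0_pi_le) auto
  then show "cos ((real k - 1) * x) \<le> - 7 / 10"
    using sqrt2_half_gt unfolding cos_pi_minus cos_45 by linarith
  have "(real k - 2) * x \<le> (real k - 1) * x"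
    using x0 by (intro mult_right_mono) auto
  then have "(real k - 2) * x \<le> pi"
    using kx by linarith
  then show "0 \<le> sin ((real k - 1) * x)" and "0 \<le> sin ((real k - 2) * x)"
    using kx x0 k by (auto intro!: sin_ge_zero)
qed

lemma DPhi_growing_terms_le:
  assumes "5 \<le> k" and "pi / real k \<le> x" and "x \<le> pi / (real k - 1)"
  shows "(1 - absa x ^ 4) * (real k - 1) * cos ((real k - 1) * x)
      - absa x ^ 3 * (real k - 2) * cos ((real k - 2) * x) \<le> - 37 / 200 - 17 / 100 * real k"
proof -
  have k: "5 \<le> real k"
    using assms(1) by simp
  have x0: "0 \<le> x" and x4: "x \<le> pi / 4"
    using pi_div_k_interval_subset[OF assms] by simp_all
  note trig_bounds = sin_cos_mult_bounds[OF assms]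
  have "21 / 40 * real k - 21 / 40 = (3 / 4) * (real k - 1) * (7 / 10)"
    by (simp add: algebra_simps)
  also have "\<dots> \<le> ((1 - absa x ^ 4) * (real k - 1)) * - cos ((real k - 1) * x)"
    using absa_pow4_le_quarter[OF x0 x4] trig_bounds k by (intro mult_mono) auto
  finally have "(1 - absa x ^ 4) * (real k - 1) * cos ((real k - 1) * x) \<le> 21 / 40 - 21 / 40 * real k"
    by linarith
  moreover have "0 < absa x"
    using x0 x4 pi_gt_zero by (intro absa_pos cos_gt_zero_pi) linarith+
  then have "absa x ^ 3 * (real k - 2) * - cos ((real k - 2) * x) \<le> absa x ^ 3 * (real k - 2)"
    using k by (intro mult_left_le) auto
  moreover have "absa x ^ 3 * (real k - 2) \<le> 355 / 1000 * (real k - 2)"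
    using absa_power_bounds[OF x0 x4 assms(1)] k by (intro mult_right_mono) auto
  moreover have "355 / 1000 * (real k - 2) = 355 / 1000 * real k - 71 / 100"
    by (simp add: field_simps)
  ultimately show ?thesis
    by simp
qed

lemma DPhi_bounded_terms_le:
  assumes "5 \<le> k" and "pi / real k \<le> x" and "x \<le> pi / (real k - 1)"
  defines "b \<equiv> absa x" and "s \<equiv> sin x"
  shows "- 4 * b ^ 3 * (2 * b ^ 2 * s) * sin ((real k - 1) * x)
      - 3 * b ^ 2 * (2 * b ^ 2 * s) * sin ((real k - 2) * x)
      + real k * b ^ (k - 1) * (2 * b ^ 2 * s) * s + b ^ k * cos x \<le> 7 / 8"
proof -
  have x0: "0 < x" and x4: "x \<le> pi / 4"
    using pi_div_k_interval_subset[OF assms(1-3)] by simp_all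
  have b0: "0 < b" and b2: "b ^ 2 \<le> 1 / 2" and s0: "0 < s" and s2: "s ^ 2 \<le> 1 / 2"
    using x0 x4 absa_sq_le_half[of x] sin_sq_le_half[of x] absa_pos[of x] cos_gt_zero_pi[of x]
      sin_gt_zero[of x]
    by (auto simp: b_def s_def)
  note b_bounds = absa_power_bounds[OF less_imp_le[OF x0] x4 assms(1), folded b_def]
  have "0 \<le> b ^ 3 * (2 * b ^ 2 * s) * sin ((real k - 1) * x)"
    and "0 \<le> b ^ 2 * (2 * b ^ 2 * s) * sin ((real k - 2) * x)"
    using b0 s0 sin_cos_mult_bounds[OF assms(1-3)] by simp_all
  moreover have "real k * b ^ (k - 1) * (2 * b ^ 2 * s) * s = (real k * b ^ (k - 1)) * (2 * b ^ 2 * s ^ 2)"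
    by (simp add: power2_eq_square)
  moreover have "\<dots> \<le> (5 / 4) * (2 * (1 / 2) * (1 / 2))"
    using b_bounds b0 b2 s2 by (intro mult_mono) auto
  moreover have "b ^ k * cos x \<le> b ^ k"
    using b0 by (intro mult_left_le) auto
  ultimately show ?thesis
    using b_bounds by linarith
qed

lemma DPhi_neg:
  assumes "5 \<le> k" and "pi / real k \<le> x" and "x \<le> pi / (real k - 1)"
  shows "DPhi k x < 0"
  using DPhi_growing_terms_le[OF assms] DPhi_bounded_terms_le[OF assms] assms(1)
  unfolding DPhi_def Let_def by linarith

lemma Phi_at_pi_div_k_pos:
  assumes "4 \<le> k"
  shows "0 < Phi k (pi / real k)"
proof -
  define x b where "x = pi / real k" and "b = absa x"
  have k: "4 \<le> real k"
    using assms by simp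
  have x0: "0 < x"
    using k by (simp add: x_def)
  have x4: "x \<le> pi / 4"
    unfolding x_def using k by (intro divide_left_mono) auto
  have "0 < cos x"
    by (rule cos_gt_zero_pi) (use x0 x4 pi_gt_zero in linarith)+
  then have b0: "0 < b" and b_cos: "2 * b * cos x = 1"
    by (simp_all add: b_def absa_pos absa_mult_cos)
  have b2: "b ^ 2 \<le> 1 / 2" and b4: "b ^ 4 \<le> 1 / 4"
    using absa_sq_le_half[of x] absa_pow4_le_quarter[of x] x0 x4 by (simp_all add: b_def)
  have "(real k - 1) * x = pi - x" and "(real k - 2) * x = pi - 2 * x"
    using k by (simp_all add: x_def field_simps)
  then have "Phi k x = (1 - b ^ 4) * sin x - b ^ 3 * (2 * sin x * cos x) + b ^ k * sin x"
    by (simp add: Phi_def b_def sin_double)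
  also have "\<dots> = sin x * (1 - b ^ 4 - b ^ 2 * (2 * b * cos x) + b ^ k)"
    by (simp add: power2_eq_square power3_eq_cube algebra_simps)
  also have "\<dots> = sin x * (1 - b ^ 4 - b ^ 2 + b ^ k)"
    by (simp add: b_cos)
  finally have "Phi k x = sin x * (1 - b ^ 4 - b ^ 2 + b ^ k)" .
  moreover have "0 < sin x"
    by (rule sin_gt_zero) (use x0 x4 pi_gt_zero in linarith)+
  moreover have "0 < b ^ k"
    using b0 by simp
  ultimately show ?thesis
    using b2 b4 by (simp add: x_def)
qed

lemma Phi_at_pi_div_k_minus_1_neg:
  assumes "5 \<le> k"
  shows "Phi k (pi / (real k - 1)) < 0"
proof -
  define x b where "x = pi / (real k - 1)" and "b = absa x"
  have k: "5 \<le> real k"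
    using assms by simp
  have x0: "0 < x"
    using k by (simp add: x_def)
  have "x \<le> pi / 4"
    unfolding x_def using k by (intro divide_left_mono) auto
  then have "1 / 2 < cos x"
    using cos_ge_sqrt2_half[of x] sqrt2_half_gt x0 by linarith
  then have "0 < b" and "b < 1"
    by (simp_all add: b_def absa_pos absa_lt_1)
  then have "b ^ k < b ^ 3"
    using assms by (intro power_strict_decreasing) auto
  moreover have "0 < sin x"
    by (rule sin_gt_zero) (use x0 \<open>x \<le> pi / 4\<close> pi_gt_zero in linarith)+
  moreover have "(real k - 1) * x = pi" and "(real k - 2) * x = pi - x"
    using k by (simp_all add: x_def field_simps)
  then have "Phi k x = sin x * (b ^ k - b ^ 3)"
    by (simp add: Phi_def b_def algebra_simps)
  ultimately show ?thesis
    by (simp add: x_def mult_pos_neg)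
qed

lemma Phi_ex1_root_ge_5:
  assumes "5 \<le> k"
  shows "\<exists>!x. pi / real k < x \<and> x < pi / (real k - 1) \<and> Phi k x = 0"
proof (rule ex1_root_of_strict_decreasing)
  have k: "5 \<le> real k"
    using assms by simp
  have cos_pos: "0 < cos x" if "pi / real k \<le> x" "x \<le> pi / (real k - 1)" for x
    by (rule cos_gt_zero_pi) (use pi_div_k_interval_subset[OF assms that] pi_gt_zero in linarith)+
  have deriv: "(Phi k has_real_derivative DPhi k x) (at x)"
    if "pi / real k \<le> x" "x \<le> pi / (real k - 1)" for x
    by (rule Phi_has_real_derivative) (use cos_pos[OF that] in simp)
  show "pi / real k \<le> pi / (real k - 1)"
    using k by (intro divide_left_mono) auto
  show "continuous_on {pi / real k..pi / (real k - 1)} (Phi k)"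
    using deriv by (intro DERIV_atLeastAtMost_imp_continuous_on) auto
  show "Phi k (pi / (real k - 1)) < 0" and "0 < Phi k (pi / real k)"
    using assms by (simp_all add: Phi_at_pi_div_k_minus_1_neg Phi_at_pi_div_k_pos)
  show "Phi k v < Phi k u" if "pi / real k \<le> u" "u < v" "v \<le> pi / (real k - 1)" for u v
  proof (rule DERIV_neg_imp_decreasing[OF that(2)])
    fix y
    assume "u \<le> y" "y \<le> v"
    then have "pi / real k \<le> y" "y \<le> pi / (real k - 1)"
      using that by linarith+
    then show "\<exists>D. (Phi k has_real_derivative D) (at y) \<and> D < 0"
      using deriv DPhi_neg[OF assms] by blast
  qed
qed

lemma Phi_4_eq:
  assumes "0 < cos x"
  shows "Phi 4 x = sin x * (1 - absa x ^ 2) * (1 - 2 * absa x ^ 4) / absa x ^ 2"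
proof -
  define b where "b = absa x"
  have b0: "0 < b"
    using assms by (simp add: b_def absa_pos)
  have cos2: "4 * cos x ^ 2 = 1 / b ^ 2" and cos1: "b ^ 3 * (2 * cos x) = b ^ 2"
    using assms by (simp_all add: b_def absa_def power2_eq_square power3_eq_cube)
  have "Phi 4 x = (1 - b ^ 4) * sin (3 * x) - b ^ 3 * sin (2 * x) + b ^ 4 * sin x"
    by (simp add: Phi_def b_def)
  also have "\<dots> = sin x * ((1 - b ^ 4) * (4 * cos x ^ 2 - 1) - b ^ 3 * (2 * cos x) + b ^ 4)"
    unfolding sin_small_multiples by (simp add: algebra_simps)
  also have "\<dots> = sin x * ((1 - b ^ 4) * (1 / b ^ 2 - 1) - b ^ 2 + b ^ 4)"
    by (simp only: cos1 cos2)
  also have "(1 - b ^ 4) * (1 / b ^ 2 - 1) - b ^ 2 + b ^ 4 = (1 - b ^ 2) * (1 - 2 * b ^ 4) / b ^ 2"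
    using b0 by (simp add: field_simps)
  finally show ?thesis
    by (simp add: b_def)
qed

lemma Phi_4_eq_0_iff:
  assumes "0 < x" and "x < pi / 3"
  shows "Phi 4 x = 0 \<longleftrightarrow> cos x ^ 4 = 1 / 8"
proof -
  define b where "b = absa x"
  have "1 / 2 < cos x"
    using assms by (intro cos_gt_half) auto
  then have b0: "0 < b" and b1: "b < 1"
    by (simp_all add: b_def absa_pos absa_lt_1)
  have "0 < sin x"
    using assms by (intro sin_gt_zero) auto
  then have "sin x * (1 - b ^ 2) / b ^ 2 \<noteq> 0"
    using b0 b1 power_strict_mono[of b 1 2] by simp
  moreover have "Phi 4 x = sin x * (1 - b ^ 2) / b ^ 2 * (1 - 2 * b ^ 4)"
    using Phi_4_eq[of x] \<open>1 / 2 < cos x\<close> by (simp add: b_def)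
  ultimately have "Phi 4 x = 0 \<longleftrightarrow> b ^ 4 = 1 / 2"
    by auto
  also have "b ^ 4 = 1 / (16 * cos x ^ 4)"
    by (simp add: b_def absa_def power_divide power_mult_distrib)
  also have "1 / (16 * cos x ^ 4) = 1 / 2 \<longleftrightarrow> cos x ^ 4 = 1 / 8"
    using \<open>1 / 2 < cos x\<close> by (simp add: field_simps)
  finally show ?thesis .
qed

lemma Phi_4_ex1_root: "\<exists>!x. pi / 4 < x \<and> x < pi / 3 \<and> Phi 4 x = 0"
proof -
  have "\<exists>!x. pi / 4 < x \<and> x < pi / 3 \<and> cos x ^ 4 - 1 / 8 = 0"
  proof (rule ex1_root_of_strict_decreasing)
    show "pi / 4 \<le> pi / 3"
      by (simp add: divide_left_mono)
    show "continuous_on {pi / 4..pi / 3} (\<lambda>x. cos x ^ 4 - 1 / 8)"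
      by (intro continuous_intros)
    have "sqrt 2 ^ 4 = (4 :: real)"
      using power_mult[of "sqrt 2" 2 2] by simp
    then show "0 < cos (pi / 4) ^ 4 - 1 / 8"
      by (simp add: cos_45 power_divide)
    show "cos (pi / 3) ^ 4 - 1 / 8 < 0"
      by (simp add: cos_60 power_divide)
    show "cos v ^ 4 - 1 / 8 < cos u ^ 4 - 1 / 8"
      if "pi / 4 \<le> u" "u < v" "v \<le> pi / 3" for u v
    proof -
      have "0 < pi / 4"
        by simp
      then have "cos v < cos u"
        using that by (intro cos_monotone_0_pi) auto
      moreover have "0 \<le> cos v"
        using that \<open>0 < pi / 4\<close> by (intro cos_ge_zero) auto
      ultimately show ?thesis
        by (simp add: power_strict_mono)
    qed
  qed
  moreover have "Phi 4 x = 0 \<longleftrightarrow> cos x ^ 4 - 1 / 8 = 0" if "pi / 4 < x" "x < pi / 3" for x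
    using Phi_4_eq_0_iff[of x] that pi_gt_zero by simp
  ultimately show ?thesis
    by blast
qed

lemma eta_spec:
  assumes "4 \<le> k"
  shows "pi / real k < eta k \<and> eta k < pi / (real k - 1) \<and> Phi k (eta k) = 0"
proof -
  have "\<exists>!x. pi / real k < x \<and> x < pi / (real k - 1) \<and> Phi k x = 0"
  proof (cases "k = 4")
    case True
    then show ?thesis
      using Phi_4_ex1_root by simp
  next
    case False
    then show ?thesis
      using assms by (intro Phi_ex1_root_ge_5) simp
  qed
  then show ?thesis
    unfolding eta_def by (rule theI')
qed

lemma cos_eta_4: "cos (eta 4) ^ 4 = 1 / 8"
  using eta_spec[of 4] Phi_4_eq_0_iff[of "eta 4"] pi_gt_zero by simp

section \<open>Positivity of Psi\<close>

lemma Psi_pos_if_absa_power_lt_sin: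
  assumes "1 / 2 < cos x" and "2 \<le> m" and "m \<le> j" and "absa x ^ (m - 2) < sin x"
  shows "0 < Psi j x"
proof -
  have "0 < absa x" and "absa x < 1"
    using assms(1) by (simp_all add: absa_pos absa_lt_1)
  then have "absa x ^ (j - 2) \<le> absa x ^ (m - 2)"
    using assms(3) by (intro power_decreasing) auto
  moreover have "absa x ^ (j - 2) * - 1 \<le> absa x ^ (j - 2) * sin ((real j + 1) * x)"
    using \<open>0 < absa x\<close> by (intro mult_left_mono) auto
  ultimately show ?thesis
    using assms(4) by (simp add: Psi_def)
qed

lemma Psi_4_pos:
  assumes "1 / 2 < cos x" and "0 < sin x"
  shows "0 < Psi 4 x"
proof -
  define c where "c = cos x"
  have "0 < c ^ 2"
    using assms(1) by (simp add: c_def)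
  have "Psi 4 x = sin x + sin x * (16 * c ^ 4 - 12 * c ^ 2 + 1) / (4 * c ^ 2)"
    by (simp add: Psi_def absa_def sin_small_multiples c_def power_divide power_mult_distrib)
  also have "\<dots> = sin x * ((4 * c ^ 2 - 1) ^ 2 / (4 * c ^ 2))"
    using \<open>0 < c ^ 2\<close> by (simp add: field_simps) (simp add: power2_eq_square power4_eq_xxxx algebra_simps)
  finally have Psi_4: "Psi 4 x = sin x * ((4 * c ^ 2 - 1) ^ 2 / (4 * c ^ 2))" .
  have "(1 / 2) ^ 2 < c ^ 2"
    using assms(1) by (intro power_strict_mono) (auto simp: c_def)
  then have "0 < (4 * c ^ 2 - 1) ^ 2 / (4 * c ^ 2)"
    by (simp add: power2_eq_square)
  with assms(2) show ?thesis
    unfolding Psi_4 by (rule mult_pos_pos)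
qed

lemma Psi_5_pos:
  assumes "0 < cos x" and "0 < sin x"
  shows "0 < Psi 5 x"
proof -
  define c where "c = cos x"
  have "0 < c"
    using assms(1) by (simp add: c_def)
  have "Psi 5 x = sin x + sin x * (32 * c ^ 5 - 32 * c ^ 3 + 6 * c) / (8 * c ^ 3)"
    by (simp add: Psi_def absa_def sin_small_multiples c_def power_divide power_mult_distrib)
  also have "\<dots> = sin x * (((4 * c ^ 2 - 3 / 2) ^ 2 + 3 / 4) / (4 * c ^ 2))"
    using \<open>0 < c\<close> by (simp add: field_simps) (simp add: power2_eq_square power3_eq_cube
        power4_eq_xxxx numeral_eq_Suc algebra_simps)
  finally have Psi_5: "Psi 5 x = sin x * (((4 * c ^ 2 - 3 / 2) ^ 2 + 3 / 4) / (4 * c ^ 2))" .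
  have "0 < ((4 * c ^ 2 - 3 / 2) ^ 2 + 3 / 4) / (4 * c ^ 2)"
    using \<open>0 < c\<close> by (simp add: add_nonneg_pos)
  with assms(2) show ?thesis
    unfolding Psi_5 by (rule mult_pos_pos)
qed

lemma absa_power_lt_sin_large:
  assumes "6 \<le> k" and "pi / (real k + 1) < x" and "x < pi / (real k - 1)"
  shows "absa x ^ (k - 2) < sin x"
proof -
  have k: "6 \<le> real k"
    using assms(1) by simp
  have "0 < x"
    using assms(2) divide_pos_pos[OF pi_gt_zero, of "real k + 1"] by linarith
  have "pi / (real k - 1) \<le> pi / 5"
    using k by (intro divide_left_mono) auto
  moreover have "pi \<le> 16 / 5"
    using pi_approx(2) by simp
  ultimately have "x \<le> 16 / 25"
    using assms(3) by linarith
  then have "x\<^sup>2 \<le> (16 / 25)\<^sup>2"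
    using \<open>0 < x\<close> by (intro power_mono) auto
  then have cos_x: "3 / 4 \<le> cos x"
    using cos_ge_1_minus_sq_half[of x] by (simp add: power2_eq_square)
  have "absa x ^ (k - 2) \<le> (2 / 3) ^ (k - 2)"
    using cos_x by (intro power_mono) (auto simp: absa_def field_simps)
  moreover have "(2 / 3) ^ (k - 2) \<le> 2 / (real k + 1)"
    using assms(1) by (rule two_thirds_power_le)
  moreover have "2 / (real k + 1) < pi / (real k + 1) * (3 / 4)"
    using divide_strict_right_mono[of 2 "3 / 4 * pi" "real k + 1"] pi_gt3 by (simp add: ac_simps)
  moreover have "pi / (real k + 1) * (3 / 4) \<le> x * cos x"
    using assms(2) cos_x \<open>0 < x\<close> by (intro mult_mono) auto
  moreover have "x * cos x \<le> sin x"
    using \<open>0 < x\<close> assms(3) \<open>pi / (real k - 1) \<le> pi / 5\<close> pi_gt_zero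
    by (intro mult_cos_le_sin) linarith+
  ultimately show ?thesis
    by linarith
qed

lemma absa_cube_lt_sin:
  assumes "pi / 6 < x" and "x < pi / 4"
  shows "absa x ^ 3 < sin x"
proof -
  have "0 < x"
    using assms(1) pi_gt_zero by linarith
  have "0 < absa x" and "absa x < 1"
    using assms \<open>0 < x\<close> cos_gt_half[of x] by (simp_all add: absa_pos absa_lt_1)
  moreover have "absa x ^ 2 \<le> 1 / 2"
    using assms \<open>0 < x\<close> by (intro absa_sq_le_half) auto
  ultimately have "absa x * absa x ^ 2 \<le> absa x * (1 / 2)" and "absa x * (1 / 2) < 1 / 2"
    by (simp_all add: mult_left_mono)
  moreover have "1 / 2 < sin x"
    using assms by (intro sin_gt_half) auto
  ultimately show ?thesis
    by (simp add: power2_eq_square power3_eq_cube)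
qed

lemma absa_pow4_lt_sin:
  assumes "pi / 6 < x" and "x < eta 4"
  shows "absa x ^ 4 < sin x"
proof -
  have eta_4: "pi / 4 < eta 4" "eta 4 < pi / 3"
    using eta_spec[of 4] by simp_all
  have "0 < x"
    using assms(1) pi_gt_zero by linarith
  have "0 \<le> cos (eta 4)"
    using eta_4 pi_gt_zero by (intro cos_ge_zero) linarith+
  moreover have "cos (eta 4) < cos x"
    using \<open>0 < x\<close> assms(2) eta_4 pi_gt_zero by (intro cos_monotone_0_pi) linarith+
  ultimately have "1 / 8 < cos x ^ 4"
    using cos_eta_4 power_strict_mono[of "cos (eta 4)" "cos x" 4] by simp
  then have "absa x ^ 4 < 1 / 2"
    by (simp add: absa_def power_divide power_mult_distrib divide_simps)
  moreover have "1 / 2 < sin x"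
    using assms eta_4 pi_gt_zero by (intro sin_gt_half) linarith+
  ultimately show ?thesis
    by linarith
qed

lemma Psi_pos_between_pi_div_5_and_eta_4:
  assumes "pi / 5 < x" and "x < eta 4" and "4 \<le> j"
  shows "0 < Psi j x"
proof -
  have "0 < x" and "pi / 6 < x"
    using assms(1) pi_gt_zero by linarith+
  moreover have "x < pi / 3"
    using eta_spec[of 4] assms(2) by simp
  ultimately have cos_x: "1 / 2 < cos x" and sin_x: "0 < sin x"
    using cos_gt_half[of x] sin_gt_zero[of x] pi_gt_zero by simp_all
  consider "j = 4" | "j = 5" | "6 \<le> j"
    using assms(3) by linarith
  then show ?thesis
  proof cases
    case 3
    have "absa x ^ 4 < sin x"
      using \<open>pi / 6 < x\<close> assms(2) by (rule absa_pow4_lt_sin)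
    with cos_x 3 show ?thesis
      by (intro Psi_pos_if_absa_power_lt_sin[of x 6]) auto
  qed (use cos_x sin_x Psi_4_pos Psi_5_pos in auto)
qed

lemma Psi_pos_ge_5:
  assumes "5 \<le> k" and "pi / (real k + 1) < x" and "x < pi / (real k - 1)" and "k \<le> j"
  shows "0 < Psi j x"
proof -
  have "0 < pi / (real k + 1)"
    by simp
  moreover have "pi / (real k - 1) \<le> pi / 4"
    using assms(1) by (intro divide_left_mono) auto
  ultimately have "1 / 2 < cos x"
    using assms(2,3) pi_gt_zero by (intro cos_gt_half) linarith+
  moreover have "absa x ^ (k - 2) < sin x"
  proof (cases "k = 5")
    case True
    then show ?thesis
      using assms(2,3) by (simp add: absa_cube_lt_sin)
  next
    case False
    with assms show ?thesis
      by (intro absa_power_lt_sin_large) auto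
  qed
  ultimately show ?thesis
    using assms(1,4) by (intro Psi_pos_if_absa_power_lt_sin) auto
qed

theorem lemma4p4:
  fixes k j :: nat and x :: real
  assumes "k \<ge> 4" and "eta (k + 1) \<le> x" and "x < eta k" and "j \<ge> k"
  shows "Psi j x > 0"
proof -
  have lower: "pi / (real k + 1) < x"
    using eta_spec[of "k + 1"] assms(1,2) by (simp add: add.commute)
  have upper: "x < pi / (real k - 1)"
    using eta_spec[of k] assms(1,3) by simp
  show ?thesis
  proof (cases "k = 4")
    case True
    with lower assms(3,4) show ?thesis
      by (intro Psi_pos_between_pi_div_5_and_eta_4) auto
  next
    case False
    with assms(1,4) lower upper show ?thesis
      by (intro Psi_pos_ge_5) auto
  qed
qed

end
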